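(* Let $q\ge 2$ and let $(\epsilon_n)_{n\ge1}$ be positive reals with $\epsilon_n\to 0$. Then there exist, for all sufficiently large $n$, ID codes for $\Pi^q_n$ with $M_n\ge 2^{\epsilon_n n^{q-1}}$ messages, type-I error probability $\lambda_{1,n}=0$ and type-II error probability $\lambda_{2,n}$, such that $\lambda_{2,n}\to 0$ as $n\to\infty$.
   Context: Fix an integer $q\ge 2$ and let $\mathcal A_q=\{1,\dots,q\}$. For $n\ge 1$, $S_n$ is the symmetric group on $\{1,\dots,n\}$, and for $\mathbf x\in\mathcal A_q^n$, $\sigma\in S_n$, we write $\sigma\mathbf x=(x_{\sigma^{-1}(1)},\dots,x_{\sigma^{-1}(n)})$. The $n$-block $q$-ary uniform permutation channel $\Pi^q_n$ has input and output alphabet $\mathcal A_q^n$ and transition probabilities $\Pi^q_n(\mathbf y\mid\mathbf x)=\frac{1}{n!}\sum_{\sigma\in S_n}\mathbf 1\{\mathbf y=\sigma\mathbf x\}$; $\Pi^q$ denotes the family $(\Pi^q_n)_{n\ge1}$. An ID code (with deterministic decoders) with $M$ messages for $\Pi^q_n$ (an "$(n,M,\lambda_1,\lambda_2)$ ID code") is a family $\{(Q_i,\mathcal D_i)\}_{i=1}^M$ where each $Q_i$ is a probability distribution on $\mathcal A_q^n$ (the stochastic encoder of message $i$) and $\mathcal D_i\subseteq\mathcal A_q^n$ (the acceptance region of message $i$). Its error probabilities are $\lambda_{i\to j}=\sum_{\mathbf x}Q_i(\mathbf x)\sum_{\mathbf y\in\mathcal D_j}\Pi^q_n(\mathbf y\mid\mathbf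 x)$ for $i\ne j$ and $\lambda_{i\not\to i}=\sum_{\mathbf x}Q_i(\mathbf x)\sum_{\mathbf y\notin\mathcal D_i}\Pi^q_n(\mathbf y\mid\mathbf x)$; the type-I error probability is $\lambda_1=\max_i\lambda_{i\not\to i}$ and the type-II error probability is $\lambda_2=\max_{i\ne j}\lambda_{i\to j}$. *)

theory Defs
  imports "HOL-Analysis.Analysis" "HOL-Combinatorics.Permutations"
begin

definition words :: "nat \<Rightarrow> nat \<Rightarrow> nat list set" where
  "words q n = {xs. length xs = n \<and> set xs \<subseteq> {1..q}}"

definition perm_word :: "(nat \<Rightarrow> nat) \<Rightarrow> nat list \<Rightarrow> nat list" where
  "perm_word \<sigma> xs = map (\<lambda>i. xs ! (inv \<sigma> i)) [0..<length xs]"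

definition perm_channel :: "nat \<Rightarrow> nat list \<Rightarrow> nat list \<Rightarrow> real" where
  "perm_channel n y x =
     (1 / fact n) * real (card {\<sigma>. \<sigma> permutes {..<n} \<and> y = perm_word \<sigma> x})"

definition err_to :: "nat \<Rightarrow> nat \<Rightarrow> (nat list \<Rightarrow> real) \<Rightarrow> nat list set \<Rightarrow> real" where
  "err_to q n Qi Dj = (\<Sum>x\<in>words q n. Qi x * (\<Sum>y\<in>Dj. perm_channel n y x))"

definition err_not_to :: "nat \<Rightarrow> nat \<Rightarrow> (nat list \<Rightarrow> real) \<Rightarrow> nat list set \<Rightarrow> real" where
  "err_not_to q n Qi Di = (\<Sum>x\<in>words q n. Qi x * (\<Sum>y\<in>words q n - Di. perm_channel n y x))"

definition is_ID_code :: "nat \<Rightarrow> nat \<Rightarrow> nat \<Rightarrow> (nat \<Rightarrow> nat list \<Rightarrow> real) \<Rightarrow> (nat \<Rightarrow> nat list set) \<Rightarrow> bool" where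
  "is_ID_code q n M Q D \<longleftrightarrow>
     (\<forall>i\<in>{1..M}. (\<forall>x\<in>words q n. 0 \<le> Q i x) \<and> (\<forall>x. x \<notin> words q n \<longrightarrow> Q i x = 0)
        \<and> (\<Sum>x\<in>words q n. Q i x) = 1 \<and> D i \<subseteq> words q n)"

text \<open>Type-I / type-II error probabilities (maxima; 0 is added only so that the max
  is defined when the index set is empty -- all errors are nonnegative).\<close>
definition type1_err :: "nat \<Rightarrow> nat \<Rightarrow> nat \<Rightarrow> (nat \<Rightarrow> nat list \<Rightarrow> real) \<Rightarrow> (nat \<Rightarrow> nat list set) \<Rightarrow> real" where
  "type1_err q n M Q D = Max (insert 0 {err_not_to q n (Q i) (D i) | i. i \<in> {1..M}})"

definition type2_err :: "nat \<Rightarrow> nat \<Rightarrow> nat \<Rightarrow> (nat \<Rightarrow> nat list \<Rightarrow> real) \<Rightarrow> (nat \<Rightarrow> nat list set) \<Rightarrow> real" where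
  "type2_err q n M Q D =
     Max (insert 0 {err_to q n (Q i) (D j) | i j. i \<in> {1..M} \<and> j \<in> {1..M} \<and> i \<noteq> j})"

end

theory Submission
  imports Defs
begin

text \<open>The permutation channel delivers exactly the type (letter multiset) of the input word, and
  there are about \<open>(n/q)^(q-1)\<close> types. Arrange \<open>a \<times> 2^r\<close> of them in a grid and let a message be a
  word \<open>c\<close> of length \<open>a\<close> over the alphabet \<open>{..<2^r}\<close>: it is sent as the type \<open>(k, c k)\<close> for a uniform
  coordinate \<open>k\<close>, and it is identified by accepting exactly the types \<open>(k, c k)\<close>. This never rejects the
  true message, and wrongly accepts \<open>c'\<close> with probability (agreements of \<open>c\<close> and \<open>c'\<close>)\<open>/a\<close>. A
  Gilbert--Varshamov code with fewer than \<open>t \<approx> 2a/r\<close> pairwise agreements has at least \<open>2^a\<close> words;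
  with \<open>a \<approx> \<epsilon>\<^sub>n n^(q-1)\<close> and \<open>r\<close> growing like \<open>log (1/\<epsilon>\<^sub>n)\<close>, the type-II error \<open>2/r\<close> tends to 0.\<close>

lemma finite_words: "finite (words q n)"
proof -
  have "words q n = {xs. set xs \<subseteq> {1..q} \<and> length xs = n}" by (auto simp: words_def)
  then show ?thesis using finite_lists_length_eq[of "{1..q}" n] by simp
qed

lemma mset_perm_word:
  assumes "\<sigma> permutes {..<length x}"
  shows "mset (perm_word \<sigma> x) = mset x"
proof -
  have "perm_word \<sigma> x = permute_list (inv \<sigma>) x"
    by (simp add: perm_word_def permute_list_def)
  then show ?thesis using permutes_inv[OF assms] by simp
qed

lemma words_mset_closed:
  assumes "x \<in> words q n" "mset y = mset x"
  shows "y \<in> words q n"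
  using assms by (auto simp: words_def dest: mset_eq_length mset_eq_setD)

lemma perm_channel_sum_type_closed:
  assumes x: "x \<in> words q n"
  shows "(\<Sum>y\<in>{y\<in>words q n. P (mset y)}. perm_channel n y x) = (if P (mset x) then 1 else 0)"
proof -
  define S where "S = {\<sigma>. \<sigma> permutes {..<n}}"
  define Y where "Y = {y\<in>words q n. P (mset y)}"
  have "finite S" unfolding S_def by (rule finite_permutations) simp
  have "finite Y" unfolding Y_def using finite_words by simp
  have card_S: "card S = fact n" unfolding S_def by (rule card_permutations) auto
  have perm_in_Y: "perm_word \<sigma> x \<in> Y \<longleftrightarrow> P (mset x)" if "\<sigma> \<in> S" for \<sigma>
  proof -
    have "mset (perm_word \<sigma> x) = mset x"
      using that x by (intro mset_perm_word) (simp add: S_def words_def)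
    then show ?thesis using x words_mset_closed by (auto simp: Y_def)
  qed
  have "perm_channel n y x = (\<Sum>\<sigma>\<in>S. if y = perm_word \<sigma> x then 1 else 0) / fact n" for y
    using sum.inter_filter[OF \<open>finite S\<close>, of "\<lambda>_. 1::real" "\<lambda>\<sigma>. y = perm_word \<sigma> x"]
    by (simp add: perm_channel_def S_def)
  then have "(\<Sum>y\<in>Y. perm_channel n y x) = (\<Sum>y\<in>Y. \<Sum>\<sigma>\<in>S. if y = perm_word \<sigma> x then 1 else 0) / fact n"
    by (simp add: sum_divide_distrib)
  also have "\<dots> = (\<Sum>\<sigma>\<in>S. \<Sum>y\<in>Y. if y = perm_word \<sigma> x then 1 else 0) / fact n"
    by (subst sum.swap) simp
  also have "\<dots> = (\<Sum>\<sigma>\<in>S. if P (mset x) then 1 else 0) / fact n"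
    using \<open>finite Y\<close> perm_in_Y by (simp add: sum.delta)
  also have "\<dots> = (if P (mset x) then 1 else 0)" using card_S by simp
  finally show ?thesis by (simp add: Y_def)
qed

definition agreements :: "nat \<Rightarrow> (nat \<Rightarrow> 'a) \<Rightarrow> (nat \<Rightarrow> 'a) \<Rightarrow> nat" where
  "agreements a f g = card {k\<in>{..<a}. f k = g k}"

lemma agreements_commute: "agreements a f g = agreements a g f"
  unfolding agreements_def by (rule arg_cong[where f = card]) auto

lemma agreements_self: "agreements a f f = a"
  by (simp add: agreements_def)

lemma card_agreements_ball_le:
  assumes "finite B"
  shows "card {g \<in> (\<Pi>\<^sub>E k\<in>{..<a}. B). t \<le> agreements a f g} \<le> (a choose t) * card B ^ (a - t)"
proof -
  define Ts where "Ts = {T. T \<subseteq> {..<a} \<and> card T = t}"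
  define P where "P T = (\<Pi>\<^sub>E k\<in>{..<a}. if k \<in> T then {f k} else B)" for T
  have "finite Ts" unfolding Ts_def by (rule finite_subset[of _ "Pow {..<a}"]) auto
  have card_Ts: "card Ts = a choose t" unfolding Ts_def using n_subsets[of "{..<a}" t] by simp
  have card_P: "card (P T) = card B ^ (a - t)" if "T \<in> Ts" for T
  proof -
    have T: "T \<subseteq> {..<a}" "card T = t" using that by (auto simp: Ts_def)
    have "card (P T) = (\<Prod>k\<in>{..<a}. if k \<in> T then 1 else card B)"
      unfolding P_def by (subst card_PiE) (auto intro: prod.cong)
    also have "\<dots> = card B ^ card ({..<a} - T)"
      by (simp add: prod.If_cases Diff_eq)
    finally show ?thesis using T by (simp add: card_Diff_subset finite_subset)
  qed
  have "{g \<in> (\<Pi>\<^sub>E k\<in>{..<a}. B). t \<le> agreements a f g} \<subseteq> (\<Union>T\<in>Ts. P T)"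
  proof
    fix g assume g: "g \<in> {g \<in> (\<Pi>\<^sub>E k\<in>{..<a}. B). t \<le> agreements a f g}"
    then obtain T where T: "T \<subseteq> {k\<in>{..<a}. f k = g k}" "card T = t"
      by (auto simp: agreements_def intro: obtain_subset_with_card_n)
    then have "T \<in> Ts" "g \<in> P T" using g by (auto simp: Ts_def P_def PiE_iff)
    then show "g \<in> (\<Union>T\<in>Ts. P T)" by blast
  qed
  then have "card {g \<in> (\<Pi>\<^sub>E k\<in>{..<a}. B). t \<le> agreements a f g} \<le> card (\<Union>T\<in>Ts. P T)"
    using \<open>finite Ts\<close> assms by (intro card_mono) (auto simp: P_def intro!: finite_PiE)
  also have "\<dots> \<le> (\<Sum>T\<in>Ts. card (P T))" by (rule card_UN_le[OF \<open>finite Ts\<close>])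
  also have "\<dots> = (a choose t) * card B ^ (a - t)" using card_P card_Ts by simp
  finally show ?thesis .
qed

text \<open>Gilbert--Varshamov: a maximal code with pairwise fewer than \<open>t\<close> agreements has its
  agreement balls of radius \<open>t\<close> covering the whole space.\<close>
lemma exists_code_few_agreements:
  assumes "finite B" "1 \<le> t" "t \<le> a"
  obtains C where "C \<subseteq> (\<Pi>\<^sub>E k\<in>{..<a}. B)"
    "\<And>f g. f \<in> C \<Longrightarrow> g \<in> C \<Longrightarrow> f \<noteq> g \<Longrightarrow> agreements a f g < t"
    "card B ^ a \<le> card C * ((a choose t) * card B ^ (a - t))"
proof -
  define F where "F = (\<Pi>\<^sub>E k\<in>{..<a}. B)"
  define code where "code C \<longleftrightarrow> C \<subseteq> F \<and> (\<forall>f\<in>C. \<forall>g\<in>C. f \<noteq> g \<longrightarrow> agreements a f g < t)" for C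
  define ball where "ball f = {g \<in> F. t \<le> agreements a f g}" for f
  have "finite F" unfolding F_def using assms(1) by (intro finite_PiE) auto
  have "code {}" by (simp add: code_def)
  moreover have "\<forall>C. code C \<longrightarrow> card C < card F + 1"
    using \<open>finite F\<close> by (auto simp: code_def intro: card_mono le_imp_less_Suc)
  ultimately obtain C where C: "code C" and maximal: "\<And>C'. code C' \<Longrightarrow> card C' \<le> card C"
    using ex_has_greatest_nat[of code "{}" card "card F + 1"] by blast
  have "C \<subseteq> F" using C by (simp add: code_def)
  then have "finite C" using \<open>finite F\<close> finite_subset by blast
  have "F \<subseteq> (\<Union>c\<in>C. ball c)"
  proof
    fix g assume "g \<in> F"
    show "g \<in> (\<Union>c\<in>C. ball c)"
    proof (rule ccontr)
      assume far: "g \<notin> (\<Union>c\<in>C. ball c)"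
      then have "g \<notin> C" using \<open>g \<in> F\<close> assms by (auto simp: ball_def agreements_self)
      have "agreements a c g < t" "agreements a g c < t" if "c \<in> C" for c
        using far that \<open>g \<in> F\<close> agreements_commute[of a g c] by (auto simp: ball_def)
      then have "code (insert g C)"
        using C \<open>g \<in> F\<close> unfolding code_def by auto
      then have "card (insert g C) \<le> card C" by (rule maximal)
      then show False using \<open>g \<notin> C\<close> \<open>finite C\<close> by simp
    qed
  qed
  have ball_le: "card (ball c) \<le> (a choose t) * card B ^ (a - t)" for c
    unfolding ball_def F_def by (rule card_agreements_ball_le[OF assms(1)])
  have "card B ^ a = card F" unfolding F_def by (simp add: card_PiE)
  also have "\<dots> \<le> card (\<Union>c\<in>C. ball c)"
    using \<open>finite C\<close> \<open>finite F\<close> \<open>F \<subseteq> (\<Union>c\<in>C. ball c)\<close> by (intro card_mono) (auto simp: ball_def)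
  also have "\<dots> \<le> (\<Sum>c\<in>C. card (ball c))" by (rule card_UN_le[OF \<open>finite C\<close>])
  also have "\<dots> \<le> card C * ((a choose t) * card B ^ (a - t))"
    using sum_mono[of C "\<lambda>c. card (ball c)", OF ball_le] by simp
  finally have size: "card B ^ a \<le> card C * ((a choose t) * card B ^ (a - t))" .
  have "agreements a f g < t" if "f \<in> C" "g \<in> C" "f \<noteq> g" for f g
    using C that by (simp add: code_def)
  with \<open>C \<subseteq> F\<close> show ?thesis unfolding F_def using size by (rule that)
qed

fun word_of_counts :: "nat \<Rightarrow> nat list \<Rightarrow> nat list" where
  "word_of_counts j [] = []"
| "word_of_counts j (c # cs) = replicate c j @ word_of_counts (Suc j) cs"

lemma count_word_of_counts:
  "count (mset (word_of_counts j cs)) v = (if j \<le> v \<and> v < j + length cs then cs ! (v - j) else 0)"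
proof (induction cs arbitrary: j)
  case (Cons c cs)
  show ?case
  proof (cases "v \<le> j")
    case True
    then show ?thesis using Cons.IH[of "Suc j"] by (cases "v = j") auto
  next
    case False
    then have "v - j = Suc (v - Suc j)" by simp
    then show ?thesis using False Cons.IH[of "Suc j"] by simp
  qed
qed simp

lemma set_word_of_counts: "set (word_of_counts j cs) \<subseteq> {j..<j + length cs}"
  by (induction cs arbitrary: j) force+

lemma length_word_of_counts: "length (word_of_counts j cs) = sum_list cs"
  by (induction cs arbitrary: j) auto

definition padded_word :: "nat \<Rightarrow> nat \<Rightarrow> nat list \<Rightarrow> nat list" where
  "padded_word q n cs = word_of_counts 1 cs @ replicate (n - sum_list cs) q"

lemma padded_word_in_words:
  assumes "length cs = q - 1" "sum_list cs \<le> n" "q \<ge> 1"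
  shows "padded_word q n cs \<in> words q n"
  using set_word_of_counts[of 1 cs] assms
  by (auto simp: padded_word_def words_def length_word_of_counts)

lemma mset_padded_word_inj:
  assumes "length cs = q - 1" "length ds = q - 1"
    and "mset (padded_word q n cs) = mset (padded_word q n ds)"
  shows "cs = ds"
proof (rule nth_equalityI)
  show "length cs = length ds" using assms by simp
  fix i assume "i < length cs"
  then have "count (mset (padded_word q n xs)) (Suc i) = xs ! i" if "length xs = q - 1" for xs
    using that assms(1) by (simp add: padded_word_def count_word_of_counts)
  from this[OF assms(1)] this[OF assms(2)] show "cs ! i = ds ! i" by (simp add: assms(3))
qed

lemma exists_words_distinct_types:
  assumes "finite A" "card A \<le> (n div q) ^ (q - 1)" "q \<ge> 1"
  obtains E where "\<And>p. p \<in> A \<Longrightarrow> E p \<in> words q n" "inj_on (\<lambda>p. mset (E p)) A"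
proof -
  define V where "V = {cs. set cs \<subseteq> {..<n div q} \<and> length cs = q - 1}"
  have "finite V" unfolding V_def by (rule finite_lists_length_eq) simp
  moreover have "card A \<le> card V"
    using assms(2) card_lists_length_eq[of "{..<n div q}" "q - 1"] by (simp add: V_def)
  ultimately obtain \<iota> where \<iota>: "\<iota> ` A \<subseteq> V" "inj_on \<iota> A"
    using card_le_inj[OF assms(1)] by blast
  have "sum_list cs \<le> n" if "cs \<in> V" for cs
  proof -
    have cs: "set cs \<subseteq> {..<n div q}" "length cs = q - 1" using that by (auto simp: V_def)
    from cs(1) have "sum_list cs \<le> length cs * (n div q)" by (induction cs) auto
    also have "\<dots> \<le> q * (n div q)" using cs(2) by simp
    also have "\<dots> \<le> n" by simp
    finally show ?thesis .
  qed
  then have "padded_word q n (\<iota> p) \<in> words q n" if "p \<in> A" for p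
    using \<iota>(1) that assms(3) by (intro padded_word_in_words) (auto simp: V_def)
  moreover have "inj_on (\<lambda>p. mset (padded_word q n (\<iota> p))) A"
  proof (rule inj_onI)
    fix p p' assume "p \<in> A" "p' \<in> A"
      and "mset (padded_word q n (\<iota> p)) = mset (padded_word q n (\<iota> p'))"
    then have "\<iota> p = \<iota> p'"
      using \<iota>(1) by (intro mset_padded_word_inj[of _ q _ n]) (auto simp: V_def)
    with \<iota>(2) show "p = p'" using \<open>p \<in> A\<close> \<open>p' \<in> A\<close> by (rule inj_onD)
  qed
  ultimately show ?thesis by (rule that)
qed

lemma finite_err_to_values:
  fixes M :: nat
  shows "finite {err_to q n (Q i) (D j) | i j. i \<in> {1..M} \<and> j \<in> {1..M} \<and> i \<noteq> j}"
proof -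
  have "{err_to q n (Q i) (D j) | i j. i \<in> {1..M} \<and> j \<in> {1..M} \<and> i \<noteq> j}
      \<subseteq> (\<lambda>(i, j). err_to q n (Q i) (D j)) ` ({1..M} \<times> {1..M})" by auto
  moreover have "finite ({1..M} \<times> {1..M})" by simp
  ultimately show ?thesis using finite_subset by blast
qed

lemma type2_err_nonneg: "0 \<le> type2_err q n M Q D"
  unfolding type2_err_def using finite_err_to_values[of q n Q D M] by (intro Max_ge) auto

lemma type2_err_le:
  assumes "0 \<le> s" "\<And>i j. i \<in> {1..M} \<Longrightarrow> j \<in> {1..M} \<Longrightarrow> i \<noteq> j \<Longrightarrow> err_to q n (Q i) (D j) \<le> s"
  shows "type2_err q n M Q D \<le> s"
  unfolding type2_err_def using assms finite_err_to_values[of q n Q D M] by (subst Max_le_iff) auto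

definition empirical_pmf :: "nat \<Rightarrow> (nat \<Rightarrow> 'a) \<Rightarrow> 'a \<Rightarrow> real" where
  "empirical_pmf a e x = (\<Sum>k<a. if x = e k then 1 else 0) / real a"

lemma sum_empirical_pmf:
  assumes "\<And>k. k < a \<Longrightarrow> e k \<in> W" "finite W"
  shows "(\<Sum>x\<in>W. empirical_pmf a e x * g x) = (\<Sum>k<a. g (e k)) / real a"
proof -
  have "(\<Sum>x\<in>W. empirical_pmf a e x * g x) = (\<Sum>k<a. \<Sum>x\<in>W. if x = e k then g x / real a else 0)"
    unfolding empirical_pmf_def
    by (subst sum.swap) (auto simp: sum_distrib_right sum_divide_distrib intro!: sum.cong)
  also have "\<dots> = (\<Sum>k<a. g (e k)) / real a"
    using assms by (simp add: sum.delta sum_divide_distrib)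
  finally show ?thesis .
qed

lemma err_to_empirical_pmf_type_closed:
  assumes "\<And>k. k < a \<Longrightarrow> e k \<in> words q n"
  shows "err_to q n (empirical_pmf a e) {y \<in> words q n. P (mset y)}
    = real (card {k\<in>{..<a}. P (mset (e k))}) / real a"
proof -
  have "err_to q n (empirical_pmf a e) {y \<in> words q n. P (mset y)}
      = (\<Sum>x\<in>words q n. empirical_pmf a e x * (if P (mset x) then 1 else 0))"
    unfolding err_to_def by (intro sum.cong refl) (simp add: perm_channel_sum_type_closed)
  also have "\<dots> = (\<Sum>k<a. if P (mset (e k)) then 1 else 0) / real a"
    using assms finite_words by (rule sum_empirical_pmf)
  finally show ?thesis by (simp add: sum.If_cases Int_def)
qed

lemma err_not_to_empirical_pmf_type_closed:
  assumes "\<And>k. k < a \<Longrightarrow> e k \<in> words q n"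
  shows "err_not_to q n (empirical_pmf a e) {y \<in> words q n. P (mset y)}
    = real (card {k\<in>{..<a}. \<not> P (mset (e k))}) / real a"
proof -
  have "words q n - {y \<in> words q n. P (mset y)} = {y \<in> words q n. \<not> P (mset y)}" by auto
  then show ?thesis
    using err_to_empirical_pmf_type_closed[OF assms, where P = "\<lambda>z. \<not> P z"]
    by (simp add: err_not_to_def err_to_def)
qed

text \<open>Since a permutation never changes the type, accepting exactly the types of the words a
  message may be sent as rules out type-I errors.\<close>
lemma ID_code_of_type_families:
  fixes e :: "nat \<Rightarrow> nat \<Rightarrow> nat list"
  assumes a: "a \<ge> 1" and e: "\<And>i k. i \<in> {1..M} \<Longrightarrow> k < a \<Longrightarrow> e i k \<in> words q n"
    and overlap: "\<And>i j. i \<in> {1..M} \<Longrightarrow> j \<in> {1..M} \<Longrightarrow> i \<noteq> j \<Longrightarrow>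
      card {k\<in>{..<a}. mset (e i k) \<in> mset ` e j ` {..<a}} \<le> s"
  shows "\<exists>Q D. is_ID_code q n M Q D \<and> type1_err q n M Q D = 0 \<and> type2_err q n M Q D \<le> real s / real a"
proof -
  define Q where "Q i = empirical_pmf a (e i)" for i
  define D where "D i = {y \<in> words q n. mset y \<in> mset ` e i ` {..<a}}" for i
  have "is_ID_code q n M Q D"
    unfolding is_ID_code_def
  proof (intro ballI conjI allI impI)
    fix i x assume i: "i \<in> {1..M}"
    show "0 \<le> Q i x" by (auto simp: Q_def empirical_pmf_def intro!: divide_nonneg_nonneg sum_nonneg)
    show "Q i x = 0" if "x \<notin> words q n"
      using e[OF i] that by (auto simp: Q_def empirical_pmf_def intro!: sum.neutral)
    show "(\<Sum>x\<in>words q n. Q i x) = 1"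
      using sum_empirical_pmf[OF e[OF i] finite_words, where g = "\<lambda>_. 1"] a by (simp add: Q_def)
    show "D i \<subseteq> words q n" by (auto simp: D_def)
  qed
  moreover have "type1_err q n M Q D = 0"
  proof -
    have "err_not_to q n (Q i) (D i) = 0" if "i \<in> {1..M}" for i
      using err_not_to_empirical_pmf_type_closed[where a = a and e = "e i"
          and P = "\<lambda>z. z \<in> mset ` e i ` {..<a}", OF e[OF that]]
      by (simp add: Q_def D_def)
    then have "insert 0 {err_not_to q n (Q i) (D i) | i. i \<in> {1..M}} = {0}" by auto
    then show ?thesis unfolding type1_err_def by (simp only: Max_singleton)
  qed
  moreover have "type2_err q n M Q D \<le> real s / real a"
  proof (rule type2_err_le)
    fix i j assume ij: "i \<in> {1..M}" "j \<in> {1..M}" "i \<noteq> j"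
    have "err_to q n (Q i) (D j) = real (card {k\<in>{..<a}. mset (e i k) \<in> mset ` e j ` {..<a}}) / real a"
      unfolding Q_def D_def by (rule err_to_empirical_pmf_type_closed[OF e[OF ij(1)]])
    then show "err_to q n (Q i) (D j) \<le> real s / real a"
      using overlap[OF ij] a by (simp add: divide_right_mono)
  qed simp
  ultimately show ?thesis by blast
qed

lemma exists_ID_code_of_agreement_code:
  assumes "q \<ge> 1" "1 \<le> t" "t \<le> a" "a * b \<le> (n div q) ^ (q - 1)"
  shows "\<exists>M Q D. is_ID_code q n M Q D \<and> b ^ a \<le> M * ((a choose t) * b ^ (a - t))
    \<and> type1_err q n M Q D = 0 \<and> type2_err q n M Q D \<le> real (t - 1) / real a"
proof -
  obtain E where E: "\<And>p. p \<in> {..<a} \<times> {..<b} \<Longrightarrow> E p \<in> words q n"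
    and E_types: "inj_on (\<lambda>p. mset (E p)) ({..<a} \<times> {..<b})"
    using exists_words_distinct_types[of "{..<a} \<times> {..<b}" n q] assms by auto
  obtain C where C: "C \<subseteq> (\<Pi>\<^sub>E k\<in>{..<a}. {..<b})"
    and C_agree: "\<And>f g. f \<in> C \<Longrightarrow> g \<in> C \<Longrightarrow> f \<noteq> g \<Longrightarrow> agreements a f g < t"
    and C_size: "b ^ a \<le> card C * ((a choose t) * b ^ (a - t))"
    using exists_code_few_agreements[of "{..<b}" t a] assms by auto
  define M where "M = card C"
  have "finite C" using C by (rule finite_subset) (auto intro!: finite_PiE)
  then obtain h where h: "bij_betw h {1..M} C" unfolding M_def using ex_bij_betw_nat_finite_1 by blast
  have h_range: "h i k < b" if "i \<in> {1..M}" "k < a" for i k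
  proof -
    have "h i \<in> C" using bij_betwE[OF h] that(1) by blast
    with C that(2) show ?thesis by (auto simp: PiE_iff)
  qed
  define e where "e i k = E (k, h i k)" for i k
  have same_type: "mset (e i k) \<in> mset ` e j ` {..<a} \<longleftrightarrow> h i k = h j k"
    if "i \<in> {1..M}" "j \<in> {1..M}" "k < a" for i j k
  proof
    assume "mset (e i k) \<in> mset ` e j ` {..<a}"
    then obtain k' where "k' < a" "mset (E (k, h i k)) = mset (E (k', h j k'))" by (auto simp: e_def)
    then have "(k, h i k) = (k', h j k')"
      using h_range that by (intro inj_onD[OF E_types]) auto
    then show "h i k = h j k" by auto
  qed (use that in \<open>auto simp: e_def\<close>)
  have "card {k\<in>{..<a}. mset (e i k) \<in> mset ` e j ` {..<a}} \<le> t - 1"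
    if "i \<in> {1..M}" "j \<in> {1..M}" "i \<noteq> j" for i j
  proof -
    have "h i \<noteq> h j" "h i \<in> C" "h j \<in> C"
      using h that by (auto simp: bij_betw_def dest: inj_onD)
    then have "agreements a (h i) (h j) < t" by (intro C_agree)
    then show ?thesis using same_type[OF that(1,2)] by (simp add: agreements_def cong: conj_cong)
  qed
  moreover have "e i k \<in> words q n" if "i \<in> {1..M}" "k < a" for i k
    using E h_range that by (simp add: e_def)
  ultimately show ?thesis
    using ID_code_of_type_families[of a M e q n "t - 1"] assms C_size by (auto simp: M_def)
qed

lemma le_two_mult_div:
  fixes n q :: nat
  assumes "0 < q" "q \<le> n"
  shows "n \<le> 2 * q * (n div q)"
proof -
  have "n < q * (n div q) + q" using assms mod_less_divisor[of q n] mult_div_mod_eq[of q n] by linarith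
  also have "\<dots> \<le> 2 * q * (n div q)" using assms by (simp add: div_greater_zero_iff Suc_le_eq)
  finally show ?thesis by simp
qed

lemma two_pow_le_of_ball_bound:
  fixes M a t r :: nat
  assumes "t \<le> a" "2 * a \<le> r * t" "(2 ^ r) ^ a \<le> M * ((a choose t) * (2 ^ r) ^ (a - t))"
  shows "2 ^ a \<le> M"
proof -
  have "2 ^ a * 2 ^ a = (2::nat) ^ (2 * a)" by (simp add: mult_2 power_add)
  also have "\<dots> \<le> (2 ^ r) ^ t" using assms(2) by (simp add: power_mult[symmetric])
  also have "\<dots> \<le> M * (a choose t)"
  proof -
    have "(2 ^ r) ^ t * (2 ^ r) ^ (a - t) = ((2::nat) ^ r) ^ a" using assms(1) by (simp flip: power_add)
    then have "(2 ^ r) ^ t * (2 ^ r) ^ (a - t) \<le> M * (a choose t) * ((2::nat) ^ r) ^ (a - t)"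
      using assms(3) by (simp add: mult.assoc)
    then show ?thesis by simp
  qed
  also have "\<dots> \<le> M * 2 ^ a" by (intro mult_le_mono2 binomial_le_pow2)
  finally show ?thesis by simp
qed

text \<open>The parameters: \<open>a \<approx> \<eta> n^(q-1)\<close> coordinates over an alphabet of size \<open>b = 2^r\<close>
  still fit into the \<open>(n div q)^(q-1)\<close> available types, and agreement radius
  \<open>t \<approx> 2a/r\<close> makes the Gilbert--Varshamov bound at least \<open>2^a\<close> while the type-II
  error \<open>(t - 1)/a\<close> stays below \<open>2/r\<close>.\<close>
lemma exists_ID_code_exponential:
  fixes \<eta> :: real
  assumes q: "q \<ge> 2" and n: "n \<ge> q" and \<eta>: "\<eta> * real n ^ (q - 1) \<ge> 1"
    and r: "r \<ge> 4" and r_small: "2 ^ r * \<eta> * (4 * (2 * q) ^ (q - 1)) \<le> 1"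
  shows "\<exists>M Q D. is_ID_code q n M Q D \<and> 2 powr (\<eta> * real n ^ (q - 1)) \<le> real M
    \<and> type1_err q n M Q D = 0 \<and> type2_err q n M Q D \<le> 2 / real r"
proof -
  define a where "a = nat \<lceil>\<eta> * real n ^ (q - 1)\<rceil>"
  define t where "t = 2 * a div r + 1"
  have a_ge: "\<eta> * real n ^ (q - 1) \<le> real a" unfolding a_def by linarith
  have a_le: "real a \<le> 2 * (\<eta> * real n ^ (q - 1))" unfolding a_def using \<eta> by linarith
  have "a \<ge> 1" using a_ge \<eta> by linarith
  have "t \<le> a"
  proof -
    have "2 * a div r \<le> 2 * a div 4" using r by (intro div_le_mono2) auto
    then show ?thesis using \<open>a \<ge> 1\<close> unfolding t_def by linarith
  qed
  have "a * 2 ^ r \<le> (n div q) ^ (q - 1)"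
  proof -
    have "real (a * 2 ^ r) \<le> 2 * (\<eta> * real n ^ (q - 1)) * 2 ^ r" using a_le by simp
    also have "\<dots> = real n ^ (q - 1) * (2 ^ r * \<eta> * (4 * (2 * q) ^ (q - 1))) / (2 * (2 * q) ^ (q - 1))"
      using q by (simp add: field_simps)
    also have "\<dots> \<le> real n ^ (q - 1) / (2 * (2 * q) ^ (q - 1))"
      using r_small by (intro divide_right_mono mult_left_le) auto
    also have "\<dots> \<le> real n ^ (q - 1) / (2 * q) ^ (q - 1)" using q by (intro divide_left_mono) auto
    also have "\<dots> \<le> real ((n div q) ^ (q - 1))"
    proof -
      have "n ^ (q - 1) \<le> (2 * q * (n div q)) ^ (q - 1)"
        using le_two_mult_div[of q n] q n by (intro power_mono) auto
      then have "real n ^ (q - 1) \<le> real (2 * q) ^ (q - 1) * real ((n div q) ^ (q - 1))"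
        by (metis of_nat_le_iff of_nat_mult of_nat_power power_mult_distrib)
      then show ?thesis using q by (simp add: divide_le_eq mult.commute)
    qed
    finally show ?thesis by linarith
  qed
  then obtain M Q D where code: "is_ID_code q n M Q D" "type1_err q n M Q D = 0"
    and size: "(2 ^ r) ^ a \<le> M * ((a choose t) * (2 ^ r) ^ (a - t))"
    and type2: "type2_err q n M Q D \<le> real (t - 1) / real a"
    using exists_ID_code_of_agreement_code[of q t a "2 ^ r" n] q \<open>t \<le> a\<close> by (auto simp: t_def)
  have "2 * a \<le> r * t" using mult_div_mod_eq[of r "2 * a"] mod_less_divisor[of r "2 * a"] r
    unfolding t_def distrib_left by linarith
  then have "2 ^ a \<le> M" using two_pow_le_of_ball_bound[OF \<open>t \<le> a\<close> _ size] by simp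
  then have "2 powr (\<eta> * real n ^ (q - 1)) \<le> real M"
    using a_ge powr_mono[of "\<eta> * real n ^ (q - 1)" "real a" 2]
    by (simp add: powr_realpow) (metis numeral_power_le_of_nat_cancel_iff order_trans)
  moreover have "real (t - 1) / real a \<le> 2 / real r"
  proof -
    have "real r * real (2 * a div r) \<le> real (2 * a)"
      by (metis of_nat_le_iff of_nat_mult times_div_less_eq_dividend)
    then show ?thesis using r \<open>a \<ge> 1\<close> by (simp add: t_def field_simps)
  qed
  ultimately show ?thesis using code type2 by force
qed

lemma eventually_choice:
  assumes "\<forall>\<^sub>F x in F. \<exists>y. P x y"
  shows "\<exists>f. \<forall>\<^sub>F x in F. P x (f x)"
proof -
  define f where "f x = (SOME y. P x y)" for x
  have f: "P x (f x)" if "\<exists>y. P x y" for x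
    unfolding f_def using that by (rule someI_ex)
  have "\<forall>\<^sub>F x in F. P x (f x)" by (rule eventually_mono[OF assms f])
  then show ?thesis by (rule exI[of _ f])
qed

lemma two_pow_nat_floor_log_le:
  fixes X :: real
  assumes "1 \<le> X"
  shows "2 ^ nat \<lfloor>log 2 X\<rfloor> \<le> X"
proof -
  have "0 \<le> log 2 X" using assms by simp
  then have "(2::real) ^ nat \<lfloor>log 2 X\<rfloor> = 2 powr real_of_int \<lfloor>log 2 X\<rfloor>"
    by (simp add: powr_realpow[symmetric])
  also have "\<dots> \<le> 2 powr log 2 X" by (intro powr_mono) auto
  finally show ?thesis using assms by simp
qed

lemma filterlim_nat_floor_log_at_top:
  fixes X :: "'a \<Rightarrow> real"
  assumes "filterlim X at_top F"
  shows "filterlim (\<lambda>x. nat \<lfloor>log 2 (X x)\<rfloor>) at_top F"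
  unfolding filterlim_at_top
proof
  fix R :: nat
  show "\<forall>\<^sub>F x in F. R \<le> nat \<lfloor>log 2 (X x)\<rfloor>"
    using filterlim_at_top_dense[THEN iffD1, OF assms, rule_format, of "2 ^ R"]
  proof (rule eventually_mono)
    fix x assume R: "2 ^ R < X x"
    moreover have "(0::real) < 2 ^ R" by simp
    ultimately have "0 < X x" by linarith
    with R have "real R < log 2 (X x)"
      by (subst less_log_iff) (auto simp: powr_realpow)
    then show "R \<le> nat \<lfloor>log 2 (X x)\<rfloor>" by linarith
  qed
qed

lemma eventually_choice3:
  assumes "\<forall>\<^sub>F x in F. \<exists>a b c. P x a b c"
  shows "\<exists>f g h. \<forall>\<^sub>F x in F. P x (f x) (g x) (h x)"
proof -
  have "\<forall>\<^sub>F x in F. \<exists>y. P x (fst y) (fst (snd y)) (snd (snd y))"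
    using assms by (rule eventually_mono) auto
  then obtain f where "\<forall>\<^sub>F x in F. P x (fst (f x)) (fst (snd (f x))) (snd (snd (f x)))"
    by (rule exE[OF eventually_choice])
  then show ?thesis
    by (intro exI[of _ "\<lambda>x. fst (f x)"] exI[of _ "\<lambda>x. fst (snd (f x))"] exI[of _ "\<lambda>x. snd (snd (f x))"])
qed

text \<open>The alphabet exponent \<open>r\<close> is chosen as large as the type budget allows; it tends to
  infinity because \<open>\<eta> \<longrightarrow> 0\<close>, and the type-II error is at most \<open>2/r\<close>.\<close>
lemma exists_ID_codes_with_rate:
  fixes \<eta> :: "nat \<Rightarrow> real"
  assumes q: "q \<ge> 2" and \<eta>: "\<eta> \<longlonglongrightarrow> 0" and \<eta>_large: "\<forall>\<^sub>F n in sequentially. 1 \<le> \<eta> n * real n ^ (q - 1)"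
  shows "\<exists>M Q D. (\<forall>\<^sub>F n in sequentially. is_ID_code q n (M n) (Q n) (D n)
      \<and> 2 powr (\<eta> n * real n ^ (q - 1)) \<le> real (M n) \<and> type1_err q n (M n) (Q n) (D n) = 0)
    \<and> (\<lambda>n. type2_err q n (M n) (Q n) (D n)) \<longlonglongrightarrow> 0"
proof -
  define K :: real where "K = 4 * (2 * q) ^ (q - 1)"
  define r where "r n = nat \<lfloor>log 2 (inverse (K * \<eta> n))\<rfloor>" for n
  have K\<eta>: "(\<lambda>n. K * \<eta> n) \<longlonglongrightarrow> 0" using tendsto_mult_right_zero[OF \<eta>] .
  have \<eta>_pos: "0 < \<eta> n" if "1 \<le> \<eta> n * real n ^ (q - 1)" for n
  proof (rule ccontr)
    assume "\<not> 0 < \<eta> n"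
    then have "\<eta> n * real n ^ (q - 1) \<le> 0" by (simp add: mult_nonpos_nonneg)
    with that show False by simp
  qed
  have K\<eta>_pos: "\<forall>\<^sub>F n in sequentially. 0 < K * \<eta> n"
    using \<eta>_large by (rule eventually_mono) (use \<eta>_pos q in \<open>simp add: K_def\<close>)
  have r: "filterlim r at_top sequentially"
    unfolding r_def by (intro filterlim_nat_floor_log_at_top filterlim_inverse_at_top K\<eta> K\<eta>_pos)
  have "\<forall>\<^sub>F n in sequentially. \<exists>M Q D. is_ID_code q n M Q D
      \<and> 2 powr (\<eta> n * real n ^ (q - 1)) \<le> real M \<and> type1_err q n M Q D = 0
      \<and> type2_err q n M Q D \<le> 2 / real (r n)"
    using eventually_ge_at_top[of q] filterlim_at_top[THEN iffD1, OF r, rule_format, of 4]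
      \<eta>_large K\<eta>_pos order_tendstoD(2)[OF K\<eta> zero_less_one]
  proof eventually_elim
    case (elim n)
    then have "2 ^ r n * \<eta> n * K \<le> 1"
      using two_pow_nat_floor_log_le[of "inverse (K * \<eta> n)"] by (simp add: r_def field_simps)
    then show ?case using exists_ID_code_exponential[of q n "\<eta> n" "r n"] elim q by (simp add: K_def)
  qed
  then obtain M Q D where code: "\<forall>\<^sub>F n in sequentially. is_ID_code q n (M n) (Q n) (D n)
      \<and> 2 powr (\<eta> n * real n ^ (q - 1)) \<le> real (M n) \<and> type1_err q n (M n) (Q n) (D n) = 0
      \<and> type2_err q n (M n) (Q n) (D n) \<le> 2 / real (r n)"
    by (elim exE eventually_choice3[elim_format])
  have "(\<lambda>n. 2 / real (r n)) \<longlonglongrightarrow> 0"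
    using r by (intro tendsto_divide_0[OF tendsto_const] filterlim_at_top_imp_at_infinity
        filterlim_compose[OF filterlim_real_sequentially])
  moreover have type2: "\<forall>\<^sub>F n in sequentially. type2_err q n (M n) (Q n) (D n) \<le> 2 / real (r n)"
    using code by (rule eventually_mono) simp
  ultimately have "(\<lambda>n. type2_err q n (M n) (Q n) (D n)) \<longlonglongrightarrow> 0"
    using type2_err_nonneg by (intro tendsto_sandwich[OF always_eventually type2 tendsto_const]) auto
  moreover have "\<forall>\<^sub>F n in sequentially. is_ID_code q n (M n) (Q n) (D n)
      \<and> 2 powr (\<eta> n * real n ^ (q - 1)) \<le> real (M n) \<and> type1_err q n (M n) (Q n) (D n) = 0"
    using code by (rule eventually_mono) simp
  ultimately show ?thesis by (intro exI conjI)
qed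

theorem theorem1:
  fixes q :: nat and \<epsilon> :: "nat \<Rightarrow> real"
  assumes "q \<ge> 2"
    and "\<And>n. n \<ge> 1 \<Longrightarrow> \<epsilon> n > 0"
    and "\<epsilon> \<longlonglongrightarrow> 0"
  shows "\<exists>(M :: nat \<Rightarrow> nat) (Q :: nat \<Rightarrow> nat \<Rightarrow> nat list \<Rightarrow> real) (D :: nat \<Rightarrow> nat \<Rightarrow> nat list set).
           (\<forall>\<^sub>F n in sequentially.
              is_ID_code q n (M n) (Q n) (D n)
              \<and> real (M n) \<ge> 2 powr (\<epsilon> n * real n ^ (q - 1))
              \<and> type1_err q n (M n) (Q n) (D n) = 0)
           \<and> (\<lambda>n. type2_err q n (M n) (Q n) (D n)) \<longlonglongrightarrow> 0"
proof -
  define \<eta> where "\<eta> n = max (\<epsilon> n) (1 / real n)" for n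
  have \<eta>: "\<eta> \<longlonglongrightarrow> 0"
    unfolding \<eta>_def[abs_def] using tendsto_max[OF assms(3) lim_1_over_n] by simp
  have "\<forall>\<^sub>F n in sequentially. 1 \<le> \<eta> n * real n ^ (q - 1)"
    using eventually_gt_at_top[of 0]
  proof eventually_elim
    case (elim n)
    then have "1 / real n * real n ^ 1 \<le> \<eta> n * real n ^ (q - 1)"
      using assms(1) by (intro mult_mono power_increasing) (auto simp: \<eta>_def le_max_iff_disj)
    then show ?case using elim by simp
  qed
  then obtain M Q D where code: "\<forall>\<^sub>F n in sequentially. is_ID_code q n (M n) (Q n) (D n)
      \<and> 2 powr (\<eta> n * real n ^ (q - 1)) \<le> real (M n) \<and> type1_err q n (M n) (Q n) (D n) = 0"
    and type2: "(\<lambda>n. type2_err q n (M n) (Q n) (D n)) \<longlonglongrightarrow> 0"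
    using exists_ID_codes_with_rate[OF assms(1) \<eta>] by blast
  have \<epsilon>_le_\<eta>: "2 powr (\<epsilon> n * real n ^ (q - 1)) \<le> 2 powr (\<eta> n * real n ^ (q - 1))" for n
    by (intro powr_mono mult_right_mono) (auto simp: \<eta>_def)
  have "\<forall>\<^sub>F n in sequentially. is_ID_code q n (M n) (Q n) (D n)
      \<and> 2 powr (\<epsilon> n * real n ^ (q - 1)) \<le> real (M n) \<and> type1_err q n (M n) (Q n) (D n) = 0"
    using code by (rule eventually_mono) (blast intro: order_trans[OF \<epsilon>_le_\<eta>])
  with type2 show ?thesis by (intro exI conjI)
qed

end
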